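(* Let $\pi\in\mathcal P(\mathbb R^d)$ satisfy the standing decomposition assumption with constants $\mathsf M,\mathsf L$ (defined in the context). Let $\mathsf P$ be the Random–Walk Metropolis kernel for $\pi$ with step size $h$, and assume $$0<h\le \frac{1}{\sqrt d}\min\Big\{\frac{1}{2\sqrt{\mathsf M}},\ \frac{1}{16\mathsf L}\Big\}.$$ Then for all $x,y\in\mathbb R^d$ with $\|x-y\|<h/4$, one has $\mathrm{TV}(\delta_x\mathsf P,\delta_y\mathsf P)<\tfrac34$.
   Context: Standing decomposition assumption: $\pi$ has a positive density with $\log\pi(x)=f(x)+g(x)$, where $f$ is differentiable with $\|\nabla f(x)-\nabla f(y)\|\le \mathsf M\|x-y\|$ for all $x,y$ ($f$ is $\mathsf M$-smooth), and $g$ is $\mathsf L$-Lipschitz: $|g(x)-g(y)|\le\mathsf L\|x-y\|$ for all $x,y$. Norms are Euclidean. Metropolis kernel with proposal kernel $\mathsf Q$: acceptance probability $\alpha(x,x')=\min\{1,\frac{\pi(x')\mathsf Q(x',x)}{\pi(x)\mathsf Q(x,x')}\}$ and $\mathsf P(x,y)=\alpha(x,y)\mathsf Q(x,y)+\big(1-\int\alpha(x,x')\mathsf Q(x,x')dx'\big)\delta_x(y)$. The Random–Walk Metropolis (RWM) kernel with step size $h>0$ uses $\mathsf Q(x,\cdot)=\mathcal N(x,h^2 I)$, so $\alpha(x,x')=\min\{1,\pi(x')/\pi(x)\}$. $\mathrm{TV}(\mu,\nu)=\sup_A|\mu(A)-\nu(A)|$ and $\delta_x\mathsf P=\mathsf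 P(x,\cdot)$. *)

theory Defs
  imports "HOL-Analysis.Analysis"
begin

definition rwm_proposal :: "real \<Rightarrow> 'a::euclidean_space \<Rightarrow> 'a \<Rightarrow> real" where
  "rwm_proposal h x y =
     (2 * pi * h\<^sup>2) powr (- real DIM('a) / 2) * exp (- (norm (y - x))\<^sup>2 / (2 * h\<^sup>2))"

definition rwm_accept :: "('a::euclidean_space \<Rightarrow> real) \<Rightarrow> 'a \<Rightarrow> 'a \<Rightarrow> real" where
  "rwm_accept p x x' = min 1 (p x' / p x)"

definition rwm_kernel :: "('a::euclidean_space \<Rightarrow> real) \<Rightarrow> real \<Rightarrow> 'a \<Rightarrow> 'a set \<Rightarrow> real" where
  "rwm_kernel p h x A =
     (LINT y:A|lborel. rwm_accept p x y * rwm_proposal h x y)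
     + (1 - (LINT y|lborel. rwm_accept p x y * rwm_proposal h x y)) * indicator A x"

definition rwm_tv :: "('a::euclidean_space \<Rightarrow> real) \<Rightarrow> real \<Rightarrow> 'a \<Rightarrow> 'a \<Rightarrow> real" where
  "rwm_tv p h x y = (SUP A \<in> sets (borel :: 'a measure). \<bar>rwm_kernel p h x A - rwm_kernel p h y A\<bar>)"

end

theory Submission
  imports Defs "HOL-Probability.Distributions"
begin

(* Write x = m - e and y = m + e with m the midpoint, so that norm e < h/8, and let G be the
   gradient of f at m.  The quadratic Taylor bounds for f, the Lipschitz bound for g and the
   Gaussian likelihood ratio Q(m + e, z) / Q(m, z) show that both sub-densities
   alpha(x,.) Q(x,.) and alpha(y,.) Q(y,.) dominate Q(m,.) F(. - m), where the weight F(u)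
   contains the factor exp (min 0 (G.u - |G.e|)); the total variation is then at most
   1 - int Q(m,.) F(. - m).  That factor is below 1 only on a half space, and the reflection
   u -> w - u with G.w = 2 |G.e| exchanges this half space with its complement at the price
   of a Gaussian likelihood ratio.  Hence F(u) + (ratio) F(w - u) >= exp (-X(u)) for an
   explicit X dominated by a quadratic polynomial whose Gaussian mean is at most 27/50, and
   Jensen's inequality gives 2 int Q(m,.) F(. - m) >= exp (-27/50) > 1/2. *)

section \<open>The Gaussian proposal\<close>

lemma rwm_proposal_nonneg: "0 \<le> rwm_proposal h \<mu> z"
  by (simp add: rwm_proposal_def)

lemma rwm_proposal_measurable [measurable]:
  "rwm_proposal h \<mu> \<in> borel_measurable (borel :: 'a::euclidean_space measure)"
  unfolding rwm_proposal_def by measurable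

lemma norm_power2_eq_sum_Basis: "(norm (z::'a::euclidean_space))\<^sup>2 = (\<Sum>b\<in>Basis. (z \<bullet> b)\<^sup>2)"
  unfolding power2_norm_eq_inner by (subst euclidean_inner) (simp add: power2_eq_square)

lemma rwm_proposal_zero_eq_prod_normal_density:
  assumes "0 < h"
  shows "rwm_proposal h 0 (z::'a::euclidean_space) = (\<Prod>b\<in>Basis. normal_density 0 h (z \<bullet> b))"
proof -
  have c: "0 < 2 * pi * h\<^sup>2" using assms by simp
  have "(\<Prod>b\<in>(Basis::'a set). 1 / sqrt (2 * pi * h\<^sup>2)) = ((2 * pi * h\<^sup>2) powr (-1/2)) ^ DIM('a)"
    using c by (simp add: powr_minus_divide powr_half_sqrt)
  also have "\<dots> = (2 * pi * h\<^sup>2) powr (- real DIM('a) / 2)"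
    using c by (subst powr_power) (auto simp: field_simps)
  finally have const: "(\<Prod>b\<in>(Basis::'a set). 1 / sqrt (2 * pi * h\<^sup>2)) = (2 * pi * h\<^sup>2) powr (- real DIM('a) / 2)" .
  have "(\<Prod>b\<in>Basis. exp (- (z \<bullet> b)\<^sup>2 / (2 * h\<^sup>2))) = exp (\<Sum>b\<in>Basis. - (z \<bullet> b)\<^sup>2 / (2 * h\<^sup>2))"
    by (simp add: exp_sum)
  also have "\<dots> = exp (- (norm z)\<^sup>2 / (2 * h\<^sup>2))"
    by (simp add: norm_power2_eq_sum_Basis sum_divide_distrib[symmetric] sum_negf)
  finally show ?thesis
    unfolding normal_density_def prod.distrib rwm_proposal_def using const by simp
qed

lemma has_bochner_integral_rwm_proposal_zero:
  assumes h: "0 < h"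
  shows "has_bochner_integral lborel (rwm_proposal h (0::'a::euclidean_space)) 1"
proof -
  interpret product_sigma_finite "\<lambda>_::'a. lborel::real measure" by standard
  define T where "T = (\<lambda>f. \<Sum>b\<in>(Basis::'a set). f b *\<^sub>R b)"
  have T_measurable[measurable]: "T \<in> measurable (Pi\<^sub>M Basis (\<lambda>_. lborel)) borel"
    unfolding T_def by measurable
  have lborel_eq_distr: "lborel = distr (Pi\<^sub>M Basis (\<lambda>_. lborel)) borel T"
    unfolding T_def by (rule lborel_eq)
  have proposal_T: "rwm_proposal h 0 (T f) = (\<Prod>b\<in>Basis. normal_density 0 h (f b))" for f
  proof -
    have "T f \<bullet> b = f b" if "b \<in> Basis" for b
      using that unfolding T_def
      by (simp add: inner_sum_left inner_Basis if_distrib sum.delta cong: if_cong)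
    then show ?thesis
      using rwm_proposal_zero_eq_prod_normal_density[OF h, of "T f"] by (simp cong: prod.cong)
  qed
  have "has_bochner_integral (Pi\<^sub>M Basis (\<lambda>_. lborel)) (\<lambda>f. \<Prod>b\<in>(Basis::'a set). normal_density 0 h (f b)) 1"
    unfolding has_bochner_integral_iff
  proof
    show "integrable (Pi\<^sub>M Basis (\<lambda>_. lborel)) (\<lambda>f. \<Prod>b\<in>(Basis::'a set). normal_density 0 h (f b))"
      using h by (intro product_integrable_prod) auto
    show "(\<integral>f. (\<Prod>b\<in>(Basis::'a set). normal_density 0 h (f b)) \<partial>Pi\<^sub>M Basis (\<lambda>_. lborel)) = 1"
      using h by (subst product_integral_prod) auto
  qed
  then show ?thesis
    unfolding lborel_eq_distr
    by (intro has_bochner_integral_distr) (simp_all add: proposal_T)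
qed

lemma has_bochner_integral_lborel_translate_iff:
  fixes F :: "'a::euclidean_space \<Rightarrow> 'b::{banach, second_countable_topology}"
  assumes [measurable]: "F \<in> borel_measurable borel"
  shows "has_bochner_integral lborel (\<lambda>z. F (c + z)) I \<longleftrightarrow> has_bochner_integral lborel F I"
  using integrable_distr_eq[of "(+) c" lborel borel F] integral_distr[of "(+) c" lborel borel F]
  by (simp add: lborel_distr_plus has_bochner_integral_iff)

lemma has_bochner_integral_lborel_reflect_iff:
  fixes F :: "'a::euclidean_space \<Rightarrow> 'b::{banach, second_countable_topology}"
  assumes [measurable]: "F \<in> borel_measurable borel"
  shows "has_bochner_integral lborel (\<lambda>z. F (c - z)) I \<longleftrightarrow> has_bochner_integral lborel F I"
proof -
  have "(lborel :: 'a measure) = density (distr lborel borel (\<lambda>z. c + (-1) *\<^sub>R z)) (\<lambda>_. \<bar>-1::real\<bar> ^ DIM('a))"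
    by (rule lborel_affine) simp
  then have "distr lborel borel (\<lambda>z. c - z) = (lborel :: 'a measure)"
    by (simp add: density_1)
  then show ?thesis
    using integrable_distr_eq[of "\<lambda>z. c - z" lborel borel F] integral_distr[of "\<lambda>z. c - z" lborel borel F]
    by (simp add: has_bochner_integral_iff)
qed

lemma has_bochner_integral_rwm_proposal:
  assumes "0 < h"
  shows "has_bochner_integral lborel (rwm_proposal h (\<mu>::'a::euclidean_space)) 1"
proof -
  have "rwm_proposal h \<mu> = (\<lambda>z. rwm_proposal h 0 (- \<mu> + z))"
    by (rule ext) (simp add: rwm_proposal_def)
  then show ?thesis
    using has_bochner_integral_rwm_proposal_zero[OF assms]
      has_bochner_integral_lborel_translate_iff[of "rwm_proposal h 0" "- \<mu>" 1]
    by simp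
qed

lemma rwm_proposal_shift:
  assumes "0 < h"
  shows "rwm_proposal h (m + v) z
           = rwm_proposal h m z * exp (((z - m) \<bullet> v) / h\<^sup>2 - (norm v)\<^sup>2 / (2 * h\<^sup>2))"
proof -
  have expand: "(norm (z - (m + v)))\<^sup>2 = (norm (z - m))\<^sup>2 - 2 * ((z - m) \<bullet> v) + (norm v)\<^sup>2"
    by (simp add: power2_norm_eq_inner inner_diff_left inner_diff_right inner_add_left
                  inner_add_right inner_commute)
  have "- (norm (z - (m + v)))\<^sup>2 / (2 * h\<^sup>2)
      = - (norm (z - m))\<^sup>2 / (2 * h\<^sup>2) + (((z - m) \<bullet> v) / h\<^sup>2 - (norm v)\<^sup>2 / (2 * h\<^sup>2))"
    unfolding expand using assms by (simp add: field_simps)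
  then show ?thesis
    unfolding rwm_proposal_def by (simp only: exp_add mult.assoc)
qed

lemma rwm_proposal_reflect:
  assumes "0 < h"
  shows "rwm_proposal h m (2 *\<^sub>R m + w - z)
           = rwm_proposal h m z * exp (((z - m) \<bullet> w) / h\<^sup>2 - (norm w)\<^sup>2 / (2 * h\<^sup>2))"
proof -
  have "rwm_proposal h m (2 *\<^sub>R m + w - z) = rwm_proposal h (m + w) z"
    unfolding rwm_proposal_def by (simp add: norm_minus_commute algebra_simps scaleR_2)
  then show ?thesis by (simp add: rwm_proposal_shift[OF assms])
qed

lemma has_bochner_integral_rwm_proposal_exp_inner:
  assumes h: "0 < h"
  shows "has_bochner_integral lborel (\<lambda>z. rwm_proposal h \<mu> z * exp (t * ((z - \<mu>) \<bullet> v)))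
           (exp (t\<^sup>2 * h\<^sup>2 * (norm v)\<^sup>2 / 2))"
proof -
  \<comment> \<open>exponential tilting turns the integrand into a shifted Gaussian density\<close>
  have "rwm_proposal h \<mu> z * exp (t * ((z - \<mu>) \<bullet> v))
      = rwm_proposal h (\<mu> + (t * h\<^sup>2) *\<^sub>R v) z * exp (t\<^sup>2 * h\<^sup>2 * (norm v)\<^sup>2 / 2)" for z
  proof -
    have "((z - \<mu>) \<bullet> ((t * h\<^sup>2) *\<^sub>R v)) / h\<^sup>2 - (norm ((t * h\<^sup>2) *\<^sub>R v))\<^sup>2 / (2 * h\<^sup>2)
        = t * ((z - \<mu>) \<bullet> v) - t\<^sup>2 * h\<^sup>2 * (norm v)\<^sup>2 / 2"
      using h by (simp add: field_simps power2_eq_square)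
    then show ?thesis
      by (simp add: rwm_proposal_shift[OF h] mult.assoc exp_add[symmetric])
  qed
  then show ?thesis
    using has_bochner_integral_mult_left[OF has_bochner_integral_rwm_proposal[OF h]] by simp
qed

lemma exp_add_exp_minus_ge: "2 + y\<^sup>2 \<le> exp y + exp (- (y::real))"
proof -
  let ?c = "\<lambda>n. if even n then y ^ n /\<^sub>R fact n else 0"
  have "?c sums cosh y" by (rule cosh_converges)
  moreover have "sum ?c {..<3} \<le> suminf ?c"
    using \<open>?c sums cosh y\<close> by (intro sum_le_suminf) (auto simp: sums_iff zero_le_even_power)
  moreover have "sum ?c {..<3} = 1 + y\<^sup>2 / 2"
    by (simp add: eval_nat_numeral)
  ultimately have "1 + y\<^sup>2 / 2 \<le> cosh y" by (simp add: sums_iff)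
  then show ?thesis by (simp add: cosh_field_def)
qed

lemma integrable_rwm_proposal_mult:
  fixes \<phi> :: "'a::euclidean_space \<Rightarrow> real"
  assumes h: "0 < h" and [measurable]: "\<phi> \<in> borel_measurable borel"
    and bound: "\<And>z. \<bar>\<phi> z\<bar> \<le> exp ((z - \<mu>) \<bullet> v) + exp (- ((z - \<mu>) \<bullet> v))"
  shows "integrable lborel (\<lambda>z. rwm_proposal h \<mu> z * \<phi> z)"
proof (rule Bochner_Integration.integrable_bound)
  show "integrable lborel (\<lambda>z. rwm_proposal h \<mu> z * exp ((z - \<mu>) \<bullet> v)
                              + rwm_proposal h \<mu> z * exp (- ((z - \<mu>) \<bullet> v)))"
    using has_bochner_integral_rwm_proposal_exp_inner[OF h, of \<mu> 1 v]
      has_bochner_integral_rwm_proposal_exp_inner[OF h, of \<mu> "-1" v]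
    by (intro Bochner_Integration.integrable_add) (simp_all add: has_bochner_integral_iff)
  show "AE z in lborel. norm (rwm_proposal h \<mu> z * \<phi> z)
          \<le> norm (rwm_proposal h \<mu> z * exp ((z - \<mu>) \<bullet> v)
                  + rwm_proposal h \<mu> z * exp (- ((z - \<mu>) \<bullet> v)))"
  proof (rule AE_I2)
    fix z
    have "rwm_proposal h \<mu> z * \<bar>\<phi> z\<bar>
        \<le> rwm_proposal h \<mu> z * (exp ((z - \<mu>) \<bullet> v) + exp (- ((z - \<mu>) \<bullet> v)))"
      by (intro mult_left_mono bound rwm_proposal_nonneg)
    then show "norm (rwm_proposal h \<mu> z * \<phi> z)
        \<le> norm (rwm_proposal h \<mu> z * exp ((z - \<mu>) \<bullet> v)
                + rwm_proposal h \<mu> z * exp (- ((z - \<mu>) \<bullet> v)))"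
      by (simp add: abs_mult distrib_left rwm_proposal_nonneg)
  qed
qed measurable

lemma integrable_rwm_proposal_inner:
  assumes "0 < h"
  shows "integrable lborel (\<lambda>z. rwm_proposal h \<mu> z * ((z - \<mu>) \<bullet> v))"
proof (rule integrable_rwm_proposal_mult[OF assms])
  fix z
  let ?y = "(z - \<mu>) \<bullet> v"
  have "\<bar>?y\<bar> \<le> 2 + ?y\<^sup>2"
    using zero_le_power2[of "\<bar>?y\<bar> - 1"] zero_le_power2[of ?y]
    unfolding power2_diff power2_abs one_power2 mult_1_right by linarith
  then show "\<bar>?y\<bar> \<le> exp ?y + exp (- ?y)"
    using exp_add_exp_minus_ge[of ?y] by linarith
qed measurable

lemma integrable_rwm_proposal_inner_sq:
  assumes "0 < h"
  shows "integrable lborel (\<lambda>z. rwm_proposal h \<mu> z * ((z - \<mu>) \<bullet> v)\<^sup>2)"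
proof (rule integrable_rwm_proposal_mult[OF assms])
  fix z
  show "\<bar>((z - \<mu>) \<bullet> v)\<^sup>2\<bar> \<le> exp ((z - \<mu>) \<bullet> v) + exp (- ((z - \<mu>) \<bullet> v))"
    using exp_add_exp_minus_ge[of "(z - \<mu>) \<bullet> v"] by simp
qed measurable

lemma integral_rwm_proposal_inner:
  assumes "0 < h"
  shows "integral\<^sup>L lborel (\<lambda>z. rwm_proposal h \<mu> z * ((z - \<mu>) \<bullet> v)) = 0"
proof -
  let ?F = "\<lambda>z. rwm_proposal h \<mu> z * ((z - \<mu>) \<bullet> v)"
  have "?F (2 *\<^sub>R \<mu> - z) = - ?F z" for z
  proof -
    have reflected: "2 *\<^sub>R \<mu> - z - \<mu> = - (z - \<mu>)" by (simp add: algebra_simps scaleR_2)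
    show ?thesis
      unfolding rwm_proposal_def reflected by (simp add: norm_minus_commute[of \<mu> z] inner_diff_left right_diff_distrib)
  qed
  moreover have "has_bochner_integral lborel ?F (integral\<^sup>L lborel ?F)"
    using integrable_rwm_proposal_inner[OF assms] by (simp add: has_bochner_integral_iff)
  ultimately have "has_bochner_integral lborel (\<lambda>z. - ?F z) (integral\<^sup>L lborel ?F)"
    using has_bochner_integral_lborel_reflect_iff[of ?F "2 *\<^sub>R \<mu>"] by simp
  then show ?thesis
    using has_bochner_integral_minus[OF \<open>has_bochner_integral lborel ?F _\<close>]
    by (auto dest: has_bochner_integral_eq)
qed

lemma integral_rwm_proposal_inner_sq_le_exp:
  fixes \<mu> v :: "'a::euclidean_space"
  assumes h: "0 < h" and s: "0 < s"
  defines "c \<equiv> h\<^sup>2 * (norm v)\<^sup>2 / 2"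
  shows "integral\<^sup>L lborel (\<lambda>z. rwm_proposal h \<mu> z * ((z - \<mu>) \<bullet> v)\<^sup>2) \<le> 2 * c * exp (s\<^sup>2 * c)"
proof -
  let ?g = "rwm_proposal h \<mu>" and ?y = "\<lambda>z. (z - \<mu>) \<bullet> v"
  define I where "I = integral\<^sup>L lborel (\<lambda>z. ?g z * (?y z)\<^sup>2)"
  have "g + s\<^sup>2 / 2 * (g * t\<^sup>2) \<le> (g * exp (s * t) + g * exp ((-s) * t)) / 2"
    if "0 \<le> g" for g t :: real
    using mult_left_mono[OF exp_add_exp_minus_ge[of "s * t"] that]
    by (simp add: power_mult_distrib algebra_simps)
  then have pointwise: "?g z + s\<^sup>2 / 2 * (?g z * (?y z)\<^sup>2)
      \<le> (?g z * exp (s * ?y z) + ?g z * exp ((-s) * ?y z)) / 2" for z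
    using rwm_proposal_nonneg by blast
  note mgf = has_bochner_integral_rwm_proposal_exp_inner[OF h, of \<mu> s v]
    has_bochner_integral_rwm_proposal_exp_inner[OF h, of \<mu> "-s" v]
  have "1 + s\<^sup>2 / 2 * I = integral\<^sup>L lborel (\<lambda>z. ?g z + s\<^sup>2 / 2 * (?g z * (?y z)\<^sup>2))"
    using has_bochner_integral_rwm_proposal[OF h, of \<mu>] integrable_rwm_proposal_inner_sq[OF h, of \<mu> v]
    unfolding I_def by (simp add: has_bochner_integral_iff)
  also have "\<dots> \<le> integral\<^sup>L lborel (\<lambda>z. (?g z * exp (s * ?y z) + ?g z * exp ((-s) * ?y z)) / 2)"
    using has_bochner_integral_rwm_proposal[OF h, of \<mu>] integrable_rwm_proposal_inner_sq[OF h, of \<mu> v] mgf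
    by (intro integral_mono pointwise) (auto simp: has_bochner_integral_iff)
  also have "\<dots> = exp (s\<^sup>2 * c)"
    using mgf unfolding c_def by (simp add: has_bochner_integral_iff)
  finally have "s\<^sup>2 / 2 * I \<le> exp (s\<^sup>2 * c) - 1" by simp
  also have "\<dots> \<le> s\<^sup>2 / 2 * (2 * c * exp (s\<^sup>2 * c))"
  proof -
    have "(1 - s\<^sup>2 * c) * exp (s\<^sup>2 * c) \<le> exp (- (s\<^sup>2 * c)) * exp (s\<^sup>2 * c)"
      using exp_ge_add_one_self[of "- (s\<^sup>2 * c)"] by (intro mult_right_mono) auto
    then show ?thesis by (simp add: exp_minus field_simps)
  qed
  finally show ?thesis using s unfolding I_def by simp
qed

lemma integral_rwm_proposal_inner_sq_le:
  assumes "0 < h"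
  shows "integral\<^sup>L lborel (\<lambda>z. rwm_proposal h \<mu> z * ((z - \<mu>) \<bullet> v)\<^sup>2) \<le> h\<^sup>2 * (norm v)\<^sup>2"
proof -
  define c where "c = h\<^sup>2 * (norm v)\<^sup>2 / 2"
  have "((\<lambda>s. 2 * c * exp (s\<^sup>2 * c)) \<longlongrightarrow> 2 * c * exp (0\<^sup>2 * c)) (at_right 0)"
    by (intro tendsto_intros)
  moreover have "eventually (\<lambda>s. integral\<^sup>L lborel (\<lambda>z. rwm_proposal h \<mu> z * ((z - \<mu>) \<bullet> v)\<^sup>2)
      \<le> 2 * c * exp (s\<^sup>2 * c)) (at_right (0::real))"
    using eventually_at_right_less[of "0::real"] unfolding c_def
    by eventually_elim (rule integral_rwm_proposal_inner_sq_le_exp[OF assms])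
  ultimately have "integral\<^sup>L lborel (\<lambda>z. rwm_proposal h \<mu> z * ((z - \<mu>) \<bullet> v)\<^sup>2) \<le> 2 * c * exp (0\<^sup>2 * c)"
    by (intro tendsto_le[OF _ _ tendsto_const]) simp_all
  then show ?thesis unfolding c_def by simp
qed

lemma
  assumes "0 < h"
  shows integrable_rwm_proposal_norm_sq:
      "integrable lborel (\<lambda>z. rwm_proposal h \<mu> z * (norm (z - (\<mu>::'a::euclidean_space)))\<^sup>2)"
    and integral_rwm_proposal_norm_sq_le:
      "integral\<^sup>L lborel (\<lambda>z. rwm_proposal h \<mu> z * (norm (z - \<mu>))\<^sup>2) \<le> real DIM('a) * h\<^sup>2"
proof -
  have sum_eq: "(\<lambda>z. rwm_proposal h \<mu> z * (norm (z - \<mu>))\<^sup>2)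
      = (\<lambda>z. \<Sum>b\<in>Basis. rwm_proposal h \<mu> z * ((z - \<mu>) \<bullet> b)\<^sup>2)"
    by (simp add: norm_power2_eq_sum_Basis sum_distrib_left)
  show "integrable lborel (\<lambda>z. rwm_proposal h \<mu> z * (norm (z - \<mu>))\<^sup>2)"
    unfolding sum_eq by (intro Bochner_Integration.integrable_sum integrable_rwm_proposal_inner_sq[OF assms])
  have "integral\<^sup>L lborel (\<lambda>z. rwm_proposal h \<mu> z * (norm (z - \<mu>))\<^sup>2)
      = (\<Sum>b\<in>Basis. integral\<^sup>L lborel (\<lambda>z. rwm_proposal h \<mu> z * ((z - \<mu>) \<bullet> b)\<^sup>2))"
    unfolding sum_eq by (intro Bochner_Integration.integral_sum integrable_rwm_proposal_inner_sq[OF assms])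
  also have "\<dots> \<le> (\<Sum>b\<in>(Basis::'a set). h\<^sup>2)"
    by (intro sum_mono order_trans[OF integral_rwm_proposal_inner_sq_le[OF assms]]) simp
  finally show "integral\<^sup>L lborel (\<lambda>z. rwm_proposal h \<mu> z * (norm (z - \<mu>))\<^sup>2) \<le> real DIM('a) * h\<^sup>2"
    by simp
qed

lemma
  fixes m e w :: "'a::euclidean_space" and a0 a1 a2 a3 a4 :: real
  assumes h: "0 < h" and a1: "0 \<le> a1" and a2: "0 \<le> a2" and a4: "0 \<le> a4"
  defines "P \<equiv> \<lambda>u. a0 + a1 * (norm u)\<^sup>2 + a2 * (u \<bullet> e)\<^sup>2 + a3 * (u \<bullet> w) + a4 * (u \<bullet> w)\<^sup>2"
  shows integrable_rwm_proposal_quadratic: "integrable lborel (\<lambda>z. rwm_proposal h m z * P (z - m))"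
    and integral_rwm_proposal_quadratic_le: "integral\<^sup>L lborel (\<lambda>z. rwm_proposal h m z * P (z - m))
          \<le> a0 + a1 * (real DIM('a) * h\<^sup>2) + a2 * (h\<^sup>2 * (norm e)\<^sup>2) + a4 * (h\<^sup>2 * (norm w)\<^sup>2)"
proof -
  let ?g = "rwm_proposal h m"
  have expand: "(\<lambda>z. ?g z * P (z - m)) = (\<lambda>z. a0 * ?g z + a1 * (?g z * (norm (z - m))\<^sup>2)
      + a2 * (?g z * ((z - m) \<bullet> e)\<^sup>2) + a3 * (?g z * ((z - m) \<bullet> w)) + a4 * (?g z * ((z - m) \<bullet> w)\<^sup>2))"
    unfolding P_def by (simp add: algebra_simps)
  note integrable = has_bochner_integral_rwm_proposal[OF h, of m, THEN integrable.intros]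
    integrable_rwm_proposal_norm_sq[OF h, of m] integrable_rwm_proposal_inner_sq[OF h, of m e]
    integrable_rwm_proposal_inner[OF h, of m w] integrable_rwm_proposal_inner_sq[OF h, of m w]
  show "integrable lborel (\<lambda>z. ?g z * P (z - m))"
    unfolding expand using integrable by (intro Bochner_Integration.integrable_add integrable_mult_right)
  have "integral\<^sup>L lborel (\<lambda>z. ?g z * P (z - m))
      = a0 * integral\<^sup>L lborel ?g + a1 * integral\<^sup>L lborel (\<lambda>z. ?g z * (norm (z - m))\<^sup>2)
        + a2 * integral\<^sup>L lborel (\<lambda>z. ?g z * ((z - m) \<bullet> e)\<^sup>2)
        + a3 * integral\<^sup>L lborel (\<lambda>z. ?g z * ((z - m) \<bullet> w))
        + a4 * integral\<^sup>L lborel (\<lambda>z. ?g z * ((z - m) \<bullet> w)\<^sup>2)"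
    unfolding expand using integrable by simp
  also have "\<dots> \<le> a0 + a1 * (real DIM('a) * h\<^sup>2) + a2 * (h\<^sup>2 * (norm e)\<^sup>2) + a4 * (h\<^sup>2 * (norm w)\<^sup>2)"
    using has_bochner_integral_rwm_proposal[OF h, of m] integral_rwm_proposal_inner[OF h, of m w]
      mult_left_mono[OF integral_rwm_proposal_norm_sq_le[OF h, of m] a1]
      mult_left_mono[OF integral_rwm_proposal_inner_sq_le[OF h, of m e] a2]
      mult_left_mono[OF integral_rwm_proposal_inner_sq_le[OF h, of m w] a4]
    by (simp add: has_bochner_integral_iff)
  finally show "integral\<^sup>L lborel (\<lambda>z. ?g z * P (z - m))
      \<le> a0 + a1 * (real DIM('a) * h\<^sup>2) + a2 * (h\<^sup>2 * (norm e)\<^sup>2) + a4 * (h\<^sup>2 * (norm w)\<^sup>2)" .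
qed

section \<open>Quadratic bounds for functions with Lipschitz gradient\<close>

lemma lipschitz_constant_nonneg:
  fixes F :: "'a::euclidean_space \<Rightarrow> 'b::real_normed_vector"
  assumes "\<And>z w. norm (F z - F w) \<le> K * norm (z - w)"
  shows "0 \<le> K"
proof -
  obtain b :: 'a where "b \<in> Basis" using nonempty_Basis by blast
  then have "norm (F b - F 0) \<le> K" using assms[of b 0] by simp
  then show ?thesis using norm_ge_zero order_trans by blast
qed

lemma lipschitz_gradient_lower_bound:
  fixes f :: "'a::euclidean_space \<Rightarrow> real" and gradf :: "'a \<Rightarrow> 'a"
  assumes f_grad: "\<And>z. (f has_derivative (\<lambda>v. gradf z \<bullet> v)) (at z)"
    and f_smooth: "\<And>z w. norm (gradf z - gradf w) \<le> M * norm (z - w)"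
  shows "f m + gradf m \<bullet> (z - m) - M / 2 * (norm (z - m))\<^sup>2 \<le> f z"
proof -
  define u where "u = z - m"
  define \<psi> where "\<psi> = (\<lambda>t. f (m + t *\<^sub>R u) - t * (gradf m \<bullet> u) + M / 2 * t\<^sup>2 * (norm u)\<^sup>2)"
  have deriv: "(\<psi> has_real_derivative (gradf (m + t *\<^sub>R u) \<bullet> u - gradf m \<bullet> u + M * t * (norm u)\<^sup>2)) (at t)"
    for t
  proof -
    have "((\<lambda>t. f (m + t *\<^sub>R u)) has_derivative (\<lambda>s. gradf (m + t *\<^sub>R u) \<bullet> (s *\<^sub>R u))) (at t)"
      by (rule has_derivative_compose[OF _ f_grad]) (auto intro!: derivative_eq_intros)
    then have "((\<lambda>t. f (m + t *\<^sub>R u)) has_real_derivative (gradf (m + t *\<^sub>R u) \<bullet> u)) (at t)"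
      by (rule has_derivative_imp_has_field_derivative) simp
    then show ?thesis
      unfolding \<psi>_def by (auto intro!: derivative_eq_intros)
  qed
  have deriv_nonneg: "0 \<le> gradf (m + t *\<^sub>R u) \<bullet> u - gradf m \<bullet> u + M * t * (norm u)\<^sup>2" if "0 \<le> t" for t
  proof -
    have "\<bar>(gradf (m + t *\<^sub>R u) - gradf m) \<bullet> u\<bar> \<le> norm (gradf (m + t *\<^sub>R u) - gradf m) * norm u"
      by (rule Cauchy_Schwarz_ineq2)
    also have "\<dots> \<le> M * norm (t *\<^sub>R u) * norm u"
      using f_smooth[of "m + t *\<^sub>R u" m] by (intro mult_right_mono) auto
    also have "\<dots> = M * t * (norm u)\<^sup>2" using that by (simp add: power2_eq_square)
    finally show ?thesis by (simp add: inner_diff_left)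
  qed
  have "\<psi> 0 \<le> \<psi> 1"
    by (rule DERIV_nonneg_imp_nondecreasing[of 0 1]) (use deriv deriv_nonneg in auto)
  then show ?thesis unfolding \<psi>_def u_def by simp
qed

lemma lipschitz_gradient_upper_bound:
  fixes f :: "'a::euclidean_space \<Rightarrow> real" and gradf :: "'a \<Rightarrow> 'a"
  assumes f_grad: "\<And>z. (f has_derivative (\<lambda>v. gradf z \<bullet> v)) (at z)"
    and f_smooth: "\<And>z w. norm (gradf z - gradf w) \<le> M * norm (z - w)"
  shows "f z \<le> f m + gradf m \<bullet> (z - m) + M / 2 * (norm (z - m))\<^sup>2"
proof -
  have "((\<lambda>x. - f x) has_derivative (\<lambda>v. - gradf z \<bullet> v)) (at z)" for z
    using has_derivative_minus[OF f_grad[of z]] by simp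
  moreover have "norm (- gradf z - - gradf w) \<le> M * norm (z - w)" for z w
    using f_smooth[of w z] by (simp add: norm_minus_commute algebra_simps)
  ultimately have "- f m + - gradf m \<bullet> (z - m) - M / 2 * (norm (z - m))\<^sup>2 \<le> - f z"
    by (rule lipschitz_gradient_lower_bound)
  then show ?thesis by simp
qed

section \<open>Total variation through a common lower density\<close>

lemma sub_kernel_diff_le:
  fixes a1 a2 \<nu> :: "'a::euclidean_space \<Rightarrow> real"
  assumes a1: "integrable lborel a1" and a2: "integrable lborel a2" and \<nu>: "integrable lborel \<nu>"
    and le1: "\<And>z. \<nu> z \<le> a1 z" and le2: "\<And>z. \<nu> z \<le> a2 z"
    and mass1: "integral\<^sup>L lborel a1 \<le> 1" and mass2: "integral\<^sup>L lborel a2 \<le> 1"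
    and A: "A \<in> sets borel"
  shows "((LINT z:A|lborel. a1 z) + (1 - integral\<^sup>L lborel a1) * indicator A x)
       - ((LINT z:A|lborel. a2 z) + (1 - integral\<^sup>L lborel a2) * indicator A y)
       \<le> 1 - integral\<^sup>L lborel \<nu>"
proof -
  have A': "A \<in> sets lborel" using A by simp
  have "(LINT z:A|lborel. a1 z) - (LINT z:A|lborel. a2 z)
        = integral\<^sup>L lborel (\<lambda>z. indicator A z *\<^sub>R a1 z - indicator A z *\<^sub>R a2 z)"
    unfolding set_lebesgue_integral_def
    using integrable_mult_indicator[OF A' a1] integrable_mult_indicator[OF A' a2] by simp
  also have "\<dots> \<le> integral\<^sup>L lborel (\<lambda>z. a1 z - \<nu> z)"
    using integrable_mult_indicator[OF A' a1] integrable_mult_indicator[OF A' a2] a1 \<nu> le1 le2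
    by (intro integral_mono Bochner_Integration.integrable_diff) (auto simp: indicator_def)
  also have "\<dots> = integral\<^sup>L lborel a1 - integral\<^sup>L lborel \<nu>"
    using a1 \<nu> by simp
  finally have "(LINT z:A|lborel. a1 z) - (LINT z:A|lborel. a2 z)
      \<le> integral\<^sup>L lborel a1 - integral\<^sup>L lborel \<nu>" .
  moreover have "(1 - integral\<^sup>L lborel a1) * indicator A x \<le> 1 - integral\<^sup>L lborel a1"
    using mass1 by (auto simp: indicator_def)
  moreover have "0 \<le> (1 - integral\<^sup>L lborel a2) * indicator A y"
    using mass2 by (auto simp: indicator_def)
  ultimately show ?thesis by linarith
qed

lemma rwm_tv_le_one_minus_integral:
  fixes p \<nu> :: "'a::euclidean_space \<Rightarrow> real"
  assumes p_pos: "\<And>z. 0 < p z" and [measurable]: "p \<in> borel_measurable borel" and h: "0 < h"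
    and \<nu>: "integrable lborel \<nu>"
    and le_x: "\<And>z. \<nu> z \<le> rwm_accept p x z * rwm_proposal h x z"
    and le_y: "\<And>z. \<nu> z \<le> rwm_accept p y z * rwm_proposal h y z"
  shows "rwm_tv p h x y \<le> 1 - integral\<^sup>L lborel \<nu>"
proof -
  define a where "a = (\<lambda>v z. rwm_accept p v z * rwm_proposal h v z)"
  have "0 \<le> rwm_accept p v z \<and> rwm_accept p v z \<le> 1" for v z
    unfolding rwm_accept_def using p_pos[of z] p_pos[of v] by (simp add: min_def)
  then have a_bounds: "0 \<le> a v z \<and> a v z \<le> rwm_proposal h v z" for v z
    unfolding a_def using rwm_proposal_nonneg[of h v z] by (simp add: mult_left_le_one_le)
  have "integrable lborel (a v) \<and> integral\<^sup>L lborel (a v) \<le> 1" for v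
  proof
    have proposal: "integrable lborel (rwm_proposal h v)" "integral\<^sup>L lborel (rwm_proposal h v) = 1"
      using has_bochner_integral_rwm_proposal[OF h, of v] by (auto simp: has_bochner_integral_iff)
    show "integrable lborel (a v)"
    proof (rule Bochner_Integration.integrable_bound[OF proposal(1)])
      show "a v \<in> borel_measurable lborel" unfolding a_def rwm_accept_def by measurable
      show "AE z in lborel. norm (a v z) \<le> norm (rwm_proposal h v z)"
        by (intro AE_I2) (simp add: a_bounds abs_of_nonneg rwm_proposal_nonneg)
    qed
    then show "integral\<^sup>L lborel (a v) \<le> 1"
      using integral_mono[OF _ proposal(1), of "a v"] a_bounds proposal(2) by auto
  qed
  then have kernel_diff_le: "rwm_kernel p h v A - rwm_kernel p h v' A \<le> 1 - integral\<^sup>L lborel \<nu>"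
    if "A \<in> sets borel" "v \<in> {x, y}" "v' \<in> {x, y}" for v v' A
    unfolding rwm_kernel_def a_def[symmetric]
    using that le_x le_y
    by (intro sub_kernel_diff_le[OF _ _ \<nu> _ _ _ _ that(1)]) (auto simp: a_def)
  show ?thesis
    unfolding rwm_tv_def
    by (rule cSUP_least)
       (use kernel_diff_le[of _ x y] kernel_diff_le[of _ y x] in \<open>auto simp: abs_le_iff intro: sets.empty_sets\<close>)
qed

section \<open>A common lower density for the two kernels\<close>

definition overlap_penalty :: "real \<Rightarrow> real \<Rightarrow> real \<Rightarrow> 'a::euclidean_space \<Rightarrow> 'a \<Rightarrow> real" where
  "overlap_penalty M L h e u =
     (norm e)\<^sup>2 / (2 * h\<^sup>2) + M * ((norm u)\<^sup>2 + (norm e)\<^sup>2) / 2 + L * (norm u + norm e) + \<bar>u \<bullet> e\<bar> / h\<^sup>2"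

(* Lower bound, at u = z - m, for the densities of the kernels started at m + e and m - e
   relative to Q(m, z); G plays the role of the gradient of f at m. *)
definition overlap_weight :: "real \<Rightarrow> real \<Rightarrow> real \<Rightarrow> 'a::euclidean_space \<Rightarrow> 'a \<Rightarrow> 'a \<Rightarrow> real" where
  "overlap_weight M L h G e u = exp (- overlap_penalty M L h e u + min 0 (G \<bullet> u - \<bar>G \<bullet> e\<bar>))"

lemma overlap_weight_uminus: "overlap_weight M L h G (- e) u = overlap_weight M L h G e u"
  by (simp add: overlap_weight_def overlap_penalty_def)

lemma overlap_weight_measurable [measurable]:
  "overlap_weight M L h G e \<in> borel_measurable (borel :: 'a::euclidean_space measure)"
  unfolding overlap_weight_def overlap_penalty_def by measurable

lemma overlap_weight_nonneg: "0 \<le> overlap_weight M L h G e u"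
  by (simp add: overlap_weight_def)

lemma overlap_weight_le_one:
  assumes "0 \<le> M" "0 \<le> L"
  shows "overlap_weight M L h G e u \<le> 1"
proof -
  have "0 \<le> overlap_penalty M L h e u" using assms by (simp add: overlap_penalty_def)
  then show ?thesis
    using min.cobounded1[of 0 "G \<bullet> u - \<bar>G \<bullet> e\<bar>"] by (simp add: overlap_weight_def)
qed

lemma mult_exp_le_min_1_mult:
  fixes q0 q r A B T :: real
  assumes "0 \<le> q0" and q: "q = q0 * exp A" and r: "exp B \<le> r"
    and "T \<le> A" and "T \<le> A + B"
  shows "q0 * exp T \<le> min 1 r * q"
proof (cases "1 \<le> r")
  case True
  then show ?thesis using assms by (simp add: mult_left_mono)
next
  case False
  have "q0 * exp T \<le> q0 * exp (A + B)" using assms by (simp add: mult_left_mono)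
  also have "\<dots> = exp B * q" by (simp add: q exp_add)
  also have "\<dots> \<le> r * q" using r assms by (intro mult_right_mono) simp_all
  finally show ?thesis using False by simp
qed

lemma log_density_diff_lower_bound:
  fixes f g :: "'a::euclidean_space \<Rightarrow> real" and gradf :: "'a \<Rightarrow> 'a"
  assumes f_grad: "\<And>z. (f has_derivative (\<lambda>v. gradf z \<bullet> v)) (at z)"
    and f_smooth: "\<And>z w. norm (gradf z - gradf w) \<le> M * norm (z - w)"
    and g_lip: "\<And>z w. \<bar>g z - g w\<bar> \<le> L * norm (z - w)"
    and L0: "0 \<le> L"
  shows "gradf m \<bullet> (z - m) - gradf m \<bullet> e
           - (M * ((norm (z - m))\<^sup>2 + (norm e)\<^sup>2) / 2 + L * (norm (z - m) + norm e))
         \<le> (f z + g z) - (f (m + e) + g (m + e))"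
proof -
  have "f m + gradf m \<bullet> (z - m) - M / 2 * (norm (z - m))\<^sup>2 \<le> f z"
    by (rule lipschitz_gradient_lower_bound[OF f_grad f_smooth])
  moreover have "f (m + e) \<le> f m + gradf m \<bullet> e + M / 2 * (norm e)\<^sup>2"
    using lipschitz_gradient_upper_bound[OF f_grad f_smooth, of "m + e" m] by simp
  moreover have "g (m + e) - g z \<le> L * (norm (z - m) + norm e)"
  proof -
    have "g (m + e) - g z \<le> L * norm ((z - m) - e)"
      using g_lip[of "m + e" z] by (simp add: norm_minus_commute algebra_simps)
    also have "\<dots> \<le> L * (norm (z - m) + norm e)"
      using L0 norm_triangle_ineq4[of "z - m" e] by (rule mult_left_mono[rotated])
    finally show ?thesis .
  qed
  ultimately show ?thesis by (simp add: field_simps)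
qed

lemma overlap_weight_le_rwm_density:
  fixes f g :: "'a::euclidean_space \<Rightarrow> real" and gradf :: "'a \<Rightarrow> 'a"
  assumes f_grad: "\<And>z. (f has_derivative (\<lambda>v. gradf z \<bullet> v)) (at z)"
    and f_smooth: "\<And>z w. norm (gradf z - gradf w) \<le> M * norm (z - w)"
    and g_lip: "\<And>z w. \<bar>g z - g w\<bar> \<le> L * norm (z - w)"
    and M0: "0 \<le> M" and L0: "0 \<le> L" and h: "0 < h"
  shows "rwm_proposal h m z * overlap_weight M L h (gradf m) e (z - m)
           \<le> rwm_accept (\<lambda>z. exp (f z + g z)) (m + e) z * rwm_proposal h (m + e) z"
proof -
  define G u where "G = gradf m" and "u = z - m"
  define E where "E = M * ((norm u)\<^sup>2 + (norm e)\<^sup>2) / 2 + L * (norm u + norm e)"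
  have ratio: "exp (G \<bullet> u - G \<bullet> e - E) \<le> exp (f z + g z) / exp (f (m + e) + g (m + e))"
    using log_density_diff_lower_bound[OF f_grad f_smooth g_lip L0, of m z e]
    unfolding G_def u_def E_def by (simp add: exp_diff[symmetric])
  define T where "T = - overlap_penalty M L h e u + min 0 (G \<bullet> u - \<bar>G \<bullet> e\<bar>)"
  define A where "A = (u \<bullet> e) / h\<^sup>2 - (norm e)\<^sup>2 / (2 * h\<^sup>2)"
  have "0 \<le> E" using M0 L0 unfolding E_def by simp
  moreover have "- \<bar>u \<bullet> e\<bar> / h\<^sup>2 \<le> (u \<bullet> e) / h\<^sup>2"
    by (intro divide_right_mono) auto
  moreover have "min 0 (G \<bullet> u - \<bar>G \<bullet> e\<bar>) \<le> 0" "min 0 (G \<bullet> u - \<bar>G \<bullet> e\<bar>) \<le> G \<bullet> u - \<bar>G \<bullet> e\<bar>"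
    by simp_all
  moreover have "G \<bullet> e \<le> \<bar>G \<bullet> e\<bar>" by simp
  ultimately have "T \<le> A" "T \<le> A + (G \<bullet> u - G \<bullet> e - E)"
    unfolding T_def A_def overlap_penalty_def E_def by linarith+
  moreover have "rwm_proposal h (m + e) z = rwm_proposal h m z * exp A"
    unfolding A_def u_def by (rule rwm_proposal_shift[OF h])
  ultimately show ?thesis
    unfolding rwm_accept_def overlap_weight_def G_def[symmetric] u_def[symmetric] T_def[symmetric]
    by (intro mult_exp_le_min_1_mult[OF rwm_proposal_nonneg _ ratio])
qed

section \<open>Mass of the common lower density\<close>

definition balancing_shift :: "'a::euclidean_space \<Rightarrow> 'a \<Rightarrow> 'a" where
  "balancing_shift G e = (if G = 0 then 0 else (2 * \<bar>G \<bullet> e\<bar> / (norm G)\<^sup>2) *\<^sub>R G)"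

lemma inner_balancing_shift: "G \<bullet> balancing_shift G e = 2 * \<bar>G \<bullet> e\<bar>"
  by (simp add: balancing_shift_def power2_norm_eq_inner)

lemma norm_balancing_shift_le: "norm (balancing_shift G e) \<le> 2 * norm e"
proof (cases "G = 0")
  case False
  then have "norm (balancing_shift G e) = 2 * \<bar>G \<bullet> e\<bar> / norm G"
    by (simp add: balancing_shift_def power2_eq_square)
  also have "\<dots> \<le> 2 * (norm G * norm e) / norm G"
    using Cauchy_Schwarz_ineq2[of G e] by (intro divide_right_mono) auto
  finally show ?thesis using False by simp
qed (simp add: balancing_shift_def)

lemma overlap_weight_reflection_sum:
  fixes u e G w :: "'a::euclidean_space"
  assumes M0: "0 \<le> M" and L0: "0 \<le> L" and h: "0 < h" and Gw: "G \<bullet> w = 2 * \<bar>G \<bullet> e\<bar>"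
  defines "C \<equiv> M * (norm w)\<^sup>2 / 2 + L * norm w + \<bar>w \<bullet> e\<bar> / h\<^sup>2 + (norm w)\<^sup>2 / (2 * h\<^sup>2)"
  shows "exp (- (overlap_penalty M L h e u + max 0 (C - (M + 1 / h\<^sup>2) * (u \<bullet> w))))
    \<le> overlap_weight M L h G e u
       + exp ((u \<bullet> w) / h\<^sup>2 - (norm w)\<^sup>2 / (2 * h\<^sup>2)) * overlap_weight M L h G e (w - u)"
    (is "exp (- ?X) \<le> _ + exp ?l * _")
proof -
  let ?R = "overlap_penalty M L h e"
  have norm_reflected: "(norm (w - u))\<^sup>2 = (norm u)\<^sup>2 - 2 * (u \<bullet> w) + (norm w)\<^sup>2"
    by (simp add: power2_norm_eq_inner inner_diff_left inner_diff_right inner_commute)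
  have "M * ((norm (w - u))\<^sup>2 + (norm e)\<^sup>2) / 2
      = M * ((norm u)\<^sup>2 + (norm e)\<^sup>2) / 2 - M * (u \<bullet> w) + M * (norm w)\<^sup>2 / 2"
    unfolding norm_reflected by (simp add: field_simps)
  moreover have "L * (norm (w - u) + norm e) \<le> L * (norm u + norm e) + L * norm w"
    using mult_left_mono[OF norm_triangle_ineq4[of w u] L0] by (simp add: algebra_simps)
  moreover have "\<bar>(w - u) \<bullet> e\<bar> / h\<^sup>2 \<le> \<bar>u \<bullet> e\<bar> / h\<^sup>2 + \<bar>w \<bullet> e\<bar> / h\<^sup>2"
    using h by (simp add: inner_diff_left add_divide_distrib[symmetric] divide_right_mono)
  moreover have "(M + 1 / h\<^sup>2) * (u \<bullet> w) = M * (u \<bullet> w) + (u \<bullet> w) / h\<^sup>2"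
    by (simp add: algebra_simps)
  ultimately have "?R (w - u) - ?l \<le> ?R u + (C - (M + 1 / h\<^sup>2) * (u \<bullet> w))"
    unfolding overlap_penalty_def C_def by linarith
  then have reflected: "exp (- ?X) \<le> exp ?l * exp (- ?R (w - u))"
    by (simp add: exp_add[symmetric])
  have "G \<bullet> (w - u) - \<bar>G \<bullet> e\<bar> = - (G \<bullet> u - \<bar>G \<bullet> e\<bar>)"
    using Gw by (simp add: inner_diff_right)
  then consider "overlap_weight M L h G e u = exp (- ?R u)"
    | "overlap_weight M L h G e (w - u) = exp (- ?R (w - u))"
    unfolding overlap_weight_def by (cases "0 \<le> G \<bullet> u - \<bar>G \<bullet> e\<bar>") auto
  then show ?thesis
  proof cases
    case 1
    have "exp (- ?X) \<le> exp (- ?R u)" by simp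
    moreover have "0 \<le> exp ?l * overlap_weight M L h G e (w - u)"
      by (simp add: overlap_weight_nonneg)
    ultimately show ?thesis using 1 by linarith
  next
    case 2
    have "0 \<le> overlap_weight M L h G e u" by (rule overlap_weight_nonneg)
    then show ?thesis using reflected unfolding 2 by linarith
  qed
qed

lemma overlap_exponent_le_quadratic:
  fixes u e w :: "'a::euclidean_space" and M L h C s \<tau> :: real
  assumes M0: "0 \<le> M" and L0: "0 \<le> L" and h: "0 < h" and s: "0 < s" and \<tau>: "0 < \<tau>"
  shows "overlap_penalty M L h e u + max 0 (C - (M + 1 / h\<^sup>2) * (u \<bullet> w))
       \<le> ((norm e)\<^sup>2 / (2 * h\<^sup>2) + M * (norm e)\<^sup>2 / 2 + L * h * s / 2 + L * norm e + 1 / 16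
              + C / 2 + C\<^sup>2 / (4 * \<tau>) + \<tau> / 4)
          + (M / 2 + L / (2 * h * s)) * (norm u)\<^sup>2 + (4 / h ^ 4) * (u \<bullet> e)\<^sup>2
          + (- ((M + 1 / h\<^sup>2) / 2) - (M + 1 / h\<^sup>2) * C / (2 * \<tau>)) * (u \<bullet> w)
          + ((M + 1 / h\<^sup>2)\<^sup>2 / (4 * \<tau>)) * (u \<bullet> w)\<^sup>2"
proof -
  define a where "a = M + 1 / h\<^sup>2"
  define T where "T = C - a * (u \<bullet> w)"
  have "norm u \<le> (norm u)\<^sup>2 / (2 * h * s) + h * s / 2"
    using sum_squares_bound[of "norm u" "h * s"] h s by (simp add: field_simps power2_eq_square)
  then have L_norm: "L * norm u \<le> L / (2 * h * s) * (norm u)\<^sup>2 + L * h * s / 2"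
    using mult_left_mono[OF _ L0] by (fastforce simp: field_simps)
  have "16 * h\<^sup>2 * \<bar>u \<bullet> e\<bar> \<le> 64 * (u \<bullet> e)\<^sup>2 + h ^ 4"
    using sum_squares_bound[of "8 * \<bar>u \<bullet> e\<bar>" "h\<^sup>2"]
    by (simp add: power_mult_distrib power2_abs mult.commute mult.left_commute)
  then have inner_e: "\<bar>u \<bullet> e\<bar> / h\<^sup>2 \<le> (4 / h ^ 4) * (u \<bullet> e)\<^sup>2 + 1 / 16"
    using h by (simp add: field_simps power2_eq_square power4_eq_xxxx)
  have "\<bar>T\<bar> \<le> (T\<^sup>2 / \<tau> + \<tau>) / 2"
    using sum_squares_bound[of "\<bar>T\<bar>" \<tau>] \<tau> by (simp add: field_simps power2_eq_square)
  moreover have "max 0 T \<le> T / 2 + Q / 4" if "\<bar>T\<bar> \<le> Q / 2" for Q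
    using that by linarith
  ultimately have "max 0 T \<le> T / 2 + (T\<^sup>2 / \<tau> + \<tau>) / 4" by blast
  also have "\<dots> = C / 2 + C\<^sup>2 / (4 * \<tau>) + \<tau> / 4
      + (- (a / 2) - a * C / (2 * \<tau>)) * (u \<bullet> w) + (a\<^sup>2 / (4 * \<tau>)) * (u \<bullet> w)\<^sup>2"
    unfolding T_def using \<tau> by (simp add: field_simps power2_eq_square)
  finally have max_T: "max 0 T \<le> C / 2 + C\<^sup>2 / (4 * \<tau>) + \<tau> / 4
      + (- (a / 2) - a * C / (2 * \<tau>)) * (u \<bullet> w) + (a\<^sup>2 / (4 * \<tau>)) * (u \<bullet> w)\<^sup>2" .
  have distrib: "M * ((norm u)\<^sup>2 + (norm e)\<^sup>2) / 2 = M * (norm e)\<^sup>2 / 2 + M / 2 * (norm u)\<^sup>2"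
    "L * (norm u + norm e) = L * norm u + L * norm e"
    "(M / 2 + L / (2 * h * s)) * (norm u)\<^sup>2 = M / 2 * (norm u)\<^sup>2 + L / (2 * h * s) * (norm u)\<^sup>2"
    by (simp_all add: algebra_simps)
  show ?thesis
    unfolding overlap_penalty_def a_def[symmetric] T_def[symmetric] distrib
    using L_norm inner_e max_T by linarith
qed

lemma quadratic_majorant_mean_bound_scaled:
  fixes K lam \<rho> \<omega> \<eta> d s C :: real
  assumes K: "0 \<le> K" and lam: "0 \<le> lam" and \<rho>: "0 \<le> \<rho>" and \<omega>: "0 \<le> \<omega>" and \<eta>: "0 \<le> \<eta>"
    and d: "1 \<le> d" and s: "1 \<le> s"
    and Kd: "K * d \<le> 1 / 4" and lam_s: "lam * s \<le> 1 / 16" and \<rho>8: "\<rho> \<le> 1 / 8"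
    and \<omega>\<rho>: "\<omega> \<le> 2 * \<rho>" and \<eta>\<rho>: "\<eta> \<le> \<omega> * \<rho>"
    and C_def: "C = K * \<omega>\<^sup>2 / 2 + lam * \<omega> + \<eta> + \<omega>\<^sup>2 / 2"
  shows "\<rho>\<^sup>2 / 2 + K * \<rho>\<^sup>2 / 2 + lam * s / 2 + lam * \<rho> + 1 / 16 + C / 2 + C\<^sup>2 * (3 / 4) + 1 / 12
         + (K * d / 2 + lam * s / 2) + 4 * \<rho>\<^sup>2 + (K + 1)\<^sup>2 * \<omega>\<^sup>2 * (3 / 4) \<le> 27 / 50"
proof -
  have K4: "K \<le> 1 / 4" using mult_left_mono[OF d K] Kd by simp
  have lam16: "lam \<le> 1 / 16" using mult_left_mono[OF s lam] lam_s by simp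
  have \<omega>4: "\<omega> \<le> 1 / 4" using \<omega>\<rho> \<rho>8 by simp
  have \<rho>\<rho>: "\<rho>\<^sup>2 \<le> 1 / 64" using power_mono[OF \<rho>8 \<rho>, of 2] by (simp add: power_divide)
  have \<omega>\<omega>: "\<omega>\<^sup>2 \<le> 1 / 16" using power_mono[OF \<omega>4 \<omega>, of 2] by (simp add: power_divide)
  have "K * \<rho>\<^sup>2 \<le> 1 / 4 * (1 / 64)" by (intro mult_mono K4 \<rho>\<rho>) (simp_all add: K)
  moreover have "lam * \<rho> \<le> 1 / 16 * (1 / 8)" by (intro mult_mono lam16 \<rho>8) (simp_all add: lam \<rho>)
  moreover have C: "0 \<le> C" "C \<le> 11 / 128"
  proof -
    have "K * \<omega>\<^sup>2 \<le> 1 / 4 * (1 / 16)" by (intro mult_mono K4 \<omega>\<omega>) (simp_all add: K)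
    moreover have "lam * \<omega> \<le> 1 / 16 * (1 / 4)" by (intro mult_mono lam16 \<omega>4) (simp_all add: lam \<omega>)
    moreover have "\<omega> * \<rho> \<le> 1 / 4 * (1 / 8)" by (intro mult_mono \<omega>4 \<rho>8) (simp_all add: \<omega> \<rho>)
    ultimately show "0 \<le> C" "C \<le> 11 / 128" unfolding C_def using K lam \<omega> \<eta> \<eta>\<rho> \<omega>\<omega> by simp_all
  qed
  moreover have "C\<^sup>2 \<le> 121 / 16384" using power_mono[OF C(2) C(1), of 2] by (simp add: power_divide)
  moreover have "(K + 1)\<^sup>2 * \<omega>\<^sup>2 \<le> 25 / 256"
  proof -
    have "(K + 1)\<^sup>2 \<le> (5 / 4)\<^sup>2" using K K4 by (intro power_mono) auto
    then have "(K + 1)\<^sup>2 * \<omega>\<^sup>2 \<le> (5 / 4)\<^sup>2 * (1 / 16)" by (intro mult_mono \<omega>\<omega>) auto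
    then show ?thesis by (simp add: power_divide)
  qed
  ultimately show ?thesis using \<rho>\<rho> lam_s Kd by linarith
qed

lemma quadratic_majorant_mean_bound:
  fixes M L h d s ne nw we C :: real
  assumes M0: "0 \<le> M" and L0: "0 \<le> L" and h: "0 < h" and d: "1 \<le> d" and s: "1 \<le> s"
    and sd: "s\<^sup>2 = d" and hM: "M * h\<^sup>2 * d \<le> 1 / 4" and hL: "L * h * s \<le> 1 / 16"
    and ne: "0 \<le> ne" "ne \<le> h / 8" and nw: "0 \<le> nw" "nw \<le> 2 * ne"
    and we: "0 \<le> we" "we \<le> nw * ne"
    and C_def: "C = M * nw\<^sup>2 / 2 + L * nw + we / h\<^sup>2 + nw\<^sup>2 / (2 * h\<^sup>2)"
  shows "(ne\<^sup>2 / (2 * h\<^sup>2) + M * ne\<^sup>2 / 2 + L * h * s / 2 + L * ne + 1 / 16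
              + C / 2 + C\<^sup>2 / (4 * (1 / 3)) + (1 / 3) / 4)
          + (M / 2 + L / (2 * h * s)) * (d * h\<^sup>2) + (4 / h ^ 4) * (h\<^sup>2 * ne\<^sup>2)
          + ((M + 1 / h\<^sup>2)\<^sup>2 / (4 * (1 / 3))) * (h\<^sup>2 * nw\<^sup>2) \<le> 27 / 50"
proof -
  define \<rho> \<omega> where "\<rho> = ne / h" and "\<omega> = nw / h"
  have h0: "h \<noteq> 0" using h by simp
  have ne_eq: "ne = h * \<rho>" and nw_eq: "nw = h * \<omega>" unfolding \<rho>_def \<omega>_def using h0 by simp_all
  have "s \<noteq> 0" using s by simp
  have scaled: "M * h\<^sup>2 * \<rho>\<^sup>2 / 2 = M * ne\<^sup>2 / 2"
    "(M / 2 + L / (2 * h * s)) * (d * h\<^sup>2) = M * h\<^sup>2 * d / 2 + L * h * s / 2"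
    "(4 / h ^ 4) * (h\<^sup>2 * ne\<^sup>2) = 4 * \<rho>\<^sup>2" "ne\<^sup>2 / (2 * h\<^sup>2) = \<rho>\<^sup>2 / 2"
    "((M + 1 / h\<^sup>2)\<^sup>2 / (4 * (1 / 3))) * (h\<^sup>2 * nw\<^sup>2) = (M * h\<^sup>2 + 1)\<^sup>2 * \<omega>\<^sup>2 * (3 / 4)"
    "C = M * h\<^sup>2 * \<omega>\<^sup>2 / 2 + L * h * \<omega> + we / h\<^sup>2 + \<omega>\<^sup>2 / 2"
    unfolding ne_eq nw_eq C_def sd[symmetric] using h0 \<open>s \<noteq> 0\<close>
    by (simp_all add: field_simps power2_eq_square power4_eq_xxxx)
  have scaled_bound: "\<rho>\<^sup>2 / 2 + M * h\<^sup>2 * \<rho>\<^sup>2 / 2 + L * h * s / 2 + L * h * \<rho> + 1 / 16 + C / 2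
      + C\<^sup>2 * (3 / 4) + 1 / 12 + (M * h\<^sup>2 * d / 2 + L * h * s / 2) + 4 * \<rho>\<^sup>2 + (M * h\<^sup>2 + 1)\<^sup>2 * \<omega>\<^sup>2 * (3 / 4) \<le> 27 / 50"
  proof (rule quadratic_majorant_mean_bound_scaled[OF _ _ _ _ _ d s hM _ _ _ _ scaled(6)])
    show "L * h * s \<le> 1 / 16" by (rule hL)
    show "\<rho> \<le> 1 / 8" "\<omega> \<le> 2 * \<rho>"
      unfolding \<rho>_def \<omega>_def using ne nw h by (simp_all add: divide_le_eq divide_right_mono)
    show "we / h\<^sup>2 \<le> \<omega> * \<rho>"
      unfolding \<rho>_def \<omega>_def using we h by (simp add: power2_eq_square divide_right_mono)
  qed (use M0 L0 h ne nw we in \<open>simp_all add: \<rho>_def \<omega>_def\<close>)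
  have more: "L * ne = L * h * \<rho>" "C\<^sup>2 / (4 * (1 / 3)) = C\<^sup>2 * (3 / 4)" "(1 / 3) / 4 = (1 / 12 :: real)"
    unfolding ne_eq by simp_all
  show ?thesis
    unfolding scaled(2-5) scaled(1)[symmetric] more using scaled_bound by simp
qed

lemma overlap_exponent_quadratic_majorant:
  fixes m e w :: "'a::euclidean_space"
  assumes M0: "0 \<le> M" and L0: "0 \<le> L" and h: "0 < h"
    and hM: "M * h\<^sup>2 * real DIM('a) \<le> 1 / 4" and hL: "L * h * sqrt (real DIM('a)) \<le> 1 / 16"
    and e: "norm e \<le> h / 8" and w: "norm w \<le> 2 * norm e"
  defines "C \<equiv> M * (norm w)\<^sup>2 / 2 + L * norm w + \<bar>w \<bullet> e\<bar> / h\<^sup>2 + (norm w)\<^sup>2 / (2 * h\<^sup>2)"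
  obtains X where "integrable lborel (\<lambda>z. rwm_proposal h m z * X (z - m))"
    and "integral\<^sup>L lborel (\<lambda>z. rwm_proposal h m z * X (z - m)) \<le> 27 / 50"
    and "\<And>u. overlap_penalty M L h e u + max 0 (C - (M + 1 / h\<^sup>2) * (u \<bullet> w)) \<le> X u"
proof -
  define d s where "d = real DIM('a)" and "s = sqrt (real DIM('a))"
  have d: "1 \<le> d" and s: "1 \<le> s" and sd: "s\<^sup>2 = d"
    unfolding d_def s_def using DIM_positive[where 'a='a] by (simp_all add: Suc_le_eq del: DIM_positive)
  \<comment> \<open>the coefficients of overlap_exponent_le_quadratic for s = sqrt d and \<tau> = 1/3\<close>
  define k0 where "k0 = (norm e)\<^sup>2 / (2 * h\<^sup>2) + M * (norm e)\<^sup>2 / 2 + L * h * s / 2 + L * norm e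
    + 1 / 16 + C / 2 + C\<^sup>2 / (4 * (1 / 3)) + (1 / 3) / 4"
  define k1 where "k1 = M / 2 + L / (2 * h * s)"
  define k2 where "k2 = 4 / h ^ 4"
  define k3 where "k3 = - ((M + 1 / h\<^sup>2) / 2) - (M + 1 / h\<^sup>2) * C / (2 * (1 / 3))"
  define k4 where "k4 = (M + 1 / h\<^sup>2)\<^sup>2 / (4 * (1 / 3))"
  define X where "X = (\<lambda>u. k0 + k1 * (norm u)\<^sup>2 + k2 * (u \<bullet> e)\<^sup>2 + k3 * (u \<bullet> w) + k4 * (u \<bullet> w)\<^sup>2)"
  have k: "0 \<le> k1" "0 \<le> k2" "0 \<le> k4"
    unfolding k1_def k2_def k4_def using M0 L0 h s by simp_all
  show thesis
  proof
    show "integrable lborel (\<lambda>z. rwm_proposal h m z * X (z - m))"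
      unfolding X_def by (rule integrable_rwm_proposal_quadratic[OF h k])
    have "integral\<^sup>L lborel (\<lambda>z. rwm_proposal h m z * X (z - m))
        \<le> k0 + k1 * (d * h\<^sup>2) + k2 * (h\<^sup>2 * (norm e)\<^sup>2) + k4 * (h\<^sup>2 * (norm w)\<^sup>2)"
      unfolding X_def d_def by (rule integral_rwm_proposal_quadratic_le[OF h k])
    also have "\<dots> \<le> 27 / 50"
      unfolding k0_def k1_def k2_def k4_def
      by (rule quadratic_majorant_mean_bound[OF M0 L0 h d s sd hM[folded d_def] hL[folded s_def]
            norm_ge_zero e norm_ge_zero w abs_ge_zero Cauchy_Schwarz_ineq2 C_def[THEN meta_eq_to_obj_eq]])
    finally show "integral\<^sup>L lborel (\<lambda>z. rwm_proposal h m z * X (z - m)) \<le> 27 / 50" .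
    show "overlap_penalty M L h e u + max 0 (C - (M + 1 / h\<^sup>2) * (u \<bullet> w)) \<le> X u" for u
      unfolding X_def k0_def k1_def k2_def k3_def k4_def
      using s by (intro overlap_exponent_le_quadratic[OF M0 L0 h]) simp_all
  qed
qed

lemma exp_neg_le_integral_of_mean_le:
  fixes q X \<phi> :: "'b \<Rightarrow> real"
  assumes q: "has_bochner_integral M q 1" "\<And>z. 0 \<le> q z"
    and qX: "integrable M (\<lambda>z. q z * X z)" "integral\<^sup>L M (\<lambda>z. q z * X z) \<le> c"
    and \<phi>: "integrable M \<phi>" "\<And>z. q z * exp (- X z) \<le> \<phi> z"
  shows "exp (- c) \<le> integral\<^sup>L M \<phi>"
proof -
  \<comment> \<open>Jensen's inequality for exp, through the tangent line of exp at -c\<close>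
  have tangent: "exp (- c) * (1 + c) * q z - exp (- c) * (q z * X z) \<le> \<phi> z" for z
  proof -
    have "1 + c - X z \<le> exp (c - X z)"
      using exp_ge_add_one_self[of "c - X z"] by linarith
    then have "exp (- c) * (1 + c - X z) \<le> exp (- c) * exp (c - X z)"
      by (intro mult_left_mono) auto
    then have "q z * (exp (- c) * (1 + c - X z)) \<le> q z * exp (- X z)"
      using q(2) by (simp add: mult_left_mono exp_add[symmetric])
    then show ?thesis using \<phi>(2)[of z] by (simp add: algebra_simps)
  qed
  have "exp (- c) * (1 + c) - exp (- c) * integral\<^sup>L M (\<lambda>z. q z * X z) \<le> integral\<^sup>L M \<phi>"
    using integral_mono[OF _ \<phi>(1) tangent] q(1) qX(1) by (simp add: has_bochner_integral_iff)
  moreover have "exp (- c) * integral\<^sup>L M (\<lambda>z. q z * X z) \<le> exp (- c) * c"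
    using qX(2) by (intro mult_left_mono) auto
  moreover have "exp (- c) * (1 + c) = exp (- c) + exp (- c) * c" by (simp add: algebra_simps)
  ultimately show ?thesis by linarith
qed

lemma half_lt_exp_neg_27_50: "1 / 2 < exp (- (27 / 50 :: real))"
proof -
  have "(73 / 100) * exp (27 / 100 :: real) \<le> exp (- (27 / 100)) * exp (27 / 100)"
    using exp_ge_add_one_self[of "- (27 / 100 :: real)"] by (intro mult_right_mono) auto
  then have "exp (27 / 100 :: real) \<le> 100 / 73" by (simp add: exp_minus)
  then have "exp (27 / 100 :: real) * exp (27 / 100) \<le> (100 / 73) * (100 / 73)"
    by (intro mult_mono) auto
  then have "exp (27 / 50 :: real) < 2" by (simp add: exp_add[symmetric])
  then show ?thesis by (simp add: exp_minus field_simps)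
qed

lemma integrable_overlap_weight:
  assumes M0: "0 \<le> M" and L0: "0 \<le> L" and h: "0 < h"
  shows "integrable lborel (\<lambda>z. rwm_proposal h m z * overlap_weight M L h G e (z - m))"
proof (rule Bochner_Integration.integrable_bound)
  show "integrable lborel (rwm_proposal h m)"
    using has_bochner_integral_rwm_proposal[OF h] by (rule integrable.intros)
  show "AE z in lborel. norm (rwm_proposal h m z * overlap_weight M L h G e (z - m))
      \<le> norm (rwm_proposal h m z)"
  proof (rule AE_I2)
    fix z
    have "rwm_proposal h m z * overlap_weight M L h G e (z - m) \<le> rwm_proposal h m z * 1"
      by (rule mult_left_mono[OF overlap_weight_le_one[OF M0 L0] rwm_proposal_nonneg])
    moreover have "0 \<le> rwm_proposal h m z * overlap_weight M L h G e (z - m)"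
      by (intro mult_nonneg_nonneg rwm_proposal_nonneg overlap_weight_nonneg)
    ultimately show "norm (rwm_proposal h m z * overlap_weight M L h G e (z - m)) \<le> norm (rwm_proposal h m z)"
      using rwm_proposal_nonneg[of h m z] by (simp only: real_norm_def abs_of_nonneg mult_1_right)
  qed
qed measurable

lemma rwm_proposal_overlap_weight_reflection:
  fixes m z e G w :: "'a::euclidean_space"
  assumes M0: "0 \<le> M" and L0: "0 \<le> L" and h: "0 < h" and Gw: "G \<bullet> w = 2 * \<bar>G \<bullet> e\<bar>"
  defines "C \<equiv> M * (norm w)\<^sup>2 / 2 + L * norm w + \<bar>w \<bullet> e\<bar> / h\<^sup>2 + (norm w)\<^sup>2 / (2 * h\<^sup>2)"
  shows "rwm_proposal h m z
           * exp (- (overlap_penalty M L h e (z - m) + max 0 (C - (M + 1 / h\<^sup>2) * ((z - m) \<bullet> w))))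
    \<le> rwm_proposal h m z * overlap_weight M L h G e (z - m)
       + rwm_proposal h m (2 *\<^sub>R m + w - z) * overlap_weight M L h G e (2 *\<^sub>R m + w - z - m)"
proof -
  have reflected_point: "2 *\<^sub>R m + w - z - m = w - (z - m)" by (simp add: algebra_simps scaleR_2)
  show ?thesis
    using mult_left_mono[OF overlap_weight_reflection_sum[OF M0 L0 h Gw, of "z - m"] rwm_proposal_nonneg]
    unfolding C_def rwm_proposal_reflect[OF h] reflected_point by (simp only: distrib_left mult.assoc)
qed

lemma integral_overlap_weight_gt:
  fixes m e G :: "'a::euclidean_space"
  assumes M0: "0 \<le> M" and L0: "0 \<le> L" and h: "0 < h"
    and h_M: "2 * sqrt M * sqrt (real DIM('a)) * h \<le> 1"
    and h_L: "16 * L * sqrt (real DIM('a)) * h \<le> 1"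
    and e: "norm e \<le> h / 8"
  shows "1 / 4 < integral\<^sup>L lborel (\<lambda>z. rwm_proposal h m z * overlap_weight M L h G e (z - m))"
proof -
  define H where "H = (\<lambda>z. rwm_proposal h m z * overlap_weight M L h G e (z - m))"
  have H: "integrable lborel H"
    unfolding H_def by (rule integrable_overlap_weight[OF M0 L0 h])
  have H_measurable: "H \<in> borel_measurable borel"
    unfolding H_def by measurable
  have "(2 * sqrt M * sqrt (real DIM('a)) * h)\<^sup>2 \<le> 1"
    using h_M M0 h by (intro power_le_one) auto
  then have hM: "M * h\<^sup>2 * real DIM('a) \<le> 1 / 4"
    using M0 by (simp add: power_mult_distrib mult_ac)
  have hL: "L * h * sqrt (real DIM('a)) \<le> 1 / 16"
    using h_L by (simp add: mult_ac)
  define w where "w = balancing_shift G e"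
  define C where "C = M * (norm w)\<^sup>2 / 2 + L * norm w + \<bar>w \<bullet> e\<bar> / h\<^sup>2 + (norm w)\<^sup>2 / (2 * h\<^sup>2)"
  obtain X where X: "integrable lborel (\<lambda>z. rwm_proposal h m z * X (z - m))"
      "integral\<^sup>L lborel (\<lambda>z. rwm_proposal h m z * X (z - m)) \<le> 27 / 50"
    and X_ge: "\<And>u. overlap_penalty M L h e u + max 0 (C - (M + 1 / h\<^sup>2) * (u \<bullet> w)) \<le> X u"
    using overlap_exponent_quadratic_majorant[OF M0 L0 h hM hL e norm_balancing_shift_le, of m]
    unfolding w_def C_def by blast
  define c where "c = 2 *\<^sub>R m + w"
  have reflected: "has_bochner_integral lborel (\<lambda>z. H (c - z)) (integral\<^sup>L lborel H)"
    using has_bochner_integral_lborel_reflect_iff[OF H_measurable, of c "integral\<^sup>L lborel H"]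
      has_bochner_integral_integrable[OF H] by simp
  have pointwise: "rwm_proposal h m z * exp (- X (z - m)) \<le> H z + H (c - z)" for z
  proof -
    let ?Y = "overlap_penalty M L h e (z - m) + max 0 (C - (M + 1 / h\<^sup>2) * ((z - m) \<bullet> w))"
    have "exp (- X (z - m)) \<le> exp (- ?Y)" using X_ge[of "z - m"] by simp
    then have "rwm_proposal h m z * exp (- X (z - m)) \<le> rwm_proposal h m z * exp (- ?Y)"
      by (rule mult_left_mono[OF _ rwm_proposal_nonneg])
    also have "\<dots> \<le> H z + H (c - z)"
      unfolding H_def c_def C_def w_def
      by (rule rwm_proposal_overlap_weight_reflection[OF M0 L0 h inner_balancing_shift])
    finally show ?thesis .
  qed
  have "exp (- (27 / 50)) \<le> integral\<^sup>L lborel (\<lambda>z. H z + H (c - z))"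
  proof (rule exp_neg_le_integral_of_mean_le[where q = "rwm_proposal h m" and X = "\<lambda>z. X (z - m)"])
    show "integrable lborel (\<lambda>z. H z + H (c - z))"
      using H reflected by (simp add: has_bochner_integral_iff)
  qed (use has_bochner_integral_rwm_proposal[OF h] rwm_proposal_nonneg X pointwise in simp_all)
  also have "\<dots> = 2 * integral\<^sup>L lborel H"
    using H reflected by (simp add: has_bochner_integral_iff)
  finally show ?thesis
    using half_lt_exp_neg_27_50 unfolding H_def by simp
qed

lemma borel_measurable_exp_add:
  fixes f g :: "'a::euclidean_space \<Rightarrow> real" and gradf :: "'a \<Rightarrow> 'a"
  assumes f_grad: "\<And>z. (f has_derivative (\<lambda>v. gradf z \<bullet> v)) (at z)"
    and g_lip: "\<And>z w. \<bar>g z - g w\<bar> \<le> L * norm (z - w)"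
  shows "(\<lambda>z. exp (f z + g z)) \<in> borel_measurable borel"
proof -
  have "continuous_on UNIV f"
    by (intro continuous_at_imp_continuous_on ballI has_derivative_continuous[OF f_grad])
  moreover have "0 \<le> L" using g_lip by (intro lipschitz_constant_nonneg[of g]) simp
  then have "continuous_on UNIV g"
    using g_lip by (intro lipschitz_on_continuous_on[of L] lipschitz_onI) (auto simp: dist_norm)
  ultimately show ?thesis
    by (intro borel_measurable_continuous_onI continuous_intros)
qed

theorem mainTheorem2:
  fixes f g :: "'a::euclidean_space \<Rightarrow> real"
    and gradf :: "'a \<Rightarrow> 'a"
    and M L h :: real and x y :: 'a
  assumes prob: "has_bochner_integral lborel (\<lambda>z. exp (f z + g z)) 1"
    and f_grad: "\<And>z. (f has_derivative (\<lambda>v. gradf z \<bullet> v)) (at z)"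
    and f_smooth: "\<And>z w. norm (gradf z - gradf w) \<le> M * norm (z - w)"
    and g_lip: "\<And>z w. \<bar>g z - g w\<bar> \<le> L * norm (z - w)"
    and h_pos: "0 < h"
    and h_M: "2 * sqrt M * sqrt (real DIM('a)) * h \<le> 1"
    and h_L: "16 * L * sqrt (real DIM('a)) * h \<le> 1"
    and xy: "norm (x - y) < h / 4"
  shows "rwm_tv (\<lambda>z. exp (f z + g z)) h x y < 3 / 4"
proof -
  define p where "p = (\<lambda>z. exp (f z + g z))"
  have M0: "0 \<le> M" by (rule lipschitz_constant_nonneg[OF f_smooth])
  have L0: "0 \<le> L" using g_lip by (intro lipschitz_constant_nonneg[of g]) simp
  define m e where "m = (1 / 2) *\<^sub>R (x + y)" and "e = (1 / 2) *\<^sub>R (y - x)"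
  have x: "x = m + - e" and y: "y = m + e"
    unfolding m_def e_def by (simp_all add: algebra_simps flip: scaleR_add_left)
  have e: "norm e \<le> h / 8"
    using xy by (simp add: e_def norm_minus_commute)
  define H where "H = (\<lambda>z. rwm_proposal h m z * overlap_weight M L h (gradf m) e (z - m))"
  have "rwm_tv p h x y \<le> 1 - integral\<^sup>L lborel H"
  proof (rule rwm_tv_le_one_minus_integral)
    show "H z \<le> rwm_accept p x z * rwm_proposal h x z" for z
      using overlap_weight_le_rwm_density[OF f_grad f_smooth g_lip M0 L0 h_pos, of m z "- e"]
      unfolding H_def p_def x by (simp add: overlap_weight_uminus)
    show "H z \<le> rwm_accept p y z * rwm_proposal h y z" for z
      using overlap_weight_le_rwm_density[OF f_grad f_smooth g_lip M0 L0 h_pos, of m z e]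
      unfolding H_def p_def y .
    show "integrable lborel H"
      unfolding H_def by (rule integrable_overlap_weight[OF M0 L0 h_pos])
    show "p \<in> borel_measurable borel"
      unfolding p_def by (rule borel_measurable_exp_add[OF f_grad g_lip])
  qed (simp_all add: p_def h_pos)
  moreover have "1 / 4 < integral\<^sup>L lborel H"
    unfolding H_def by (rule integral_overlap_weight_gt[OF M0 L0 h_pos h_M h_L e])
  ultimately show ?thesis unfolding p_def by linarith
qed

end
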